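(* Let $\mathbf{k}$ be a field of characteristic $0$, $n\ge3$, $m\in\mathbf{k}\setminus\mathcal{S}_n$, and let $\rho$ be an irreducible representation of $Br_n(m)$, indexed by the partition $\lambda$. Then either the spectrum of $\rho(t_{12})$ is contained in $\{-1,1\}$, or $|\lambda|<n$ and the spectrum of $\rho(t_{12})$ equals $\{-1,1,1-m\}$.
   Context: $Br_n(m)$ is the Brauer algebra over $\mathbf{k}$ with basis the Brauer diagrams on $n$ top and $n$ bottom points, product by stacking (second factor below) with closed loops replaced by $m$; $s_{12}$ is the transposition diagram, $p_{12}$ the diagram joining top $1$ to top $2$ and bottom $1$ to bottom $2$ with other strands vertical, $t_{12}=s_{12}-p_{12}$. For a partition $\mu$ with $|\mu|\le n$, $n-|\mu|$ even, $P_\mu\in\mathbb{Q}[m]$ is the polynomial equal, at every sufficiently large integer $m$, to the dimension of the irreducible $O(m)$-module indexed by $\mu$; $\mathcal{S}_n=\{m\mid\exists\mu,\ |\mu|\le n,\ P_\mu(m)=0\}\subset\mathbb{Z}$. For $m\notin\mathcal{S}_n$, $Br_n(m)$ is split semisimple with irreducible representations indexed (Wenzl's parametrization) by partitions $\mu$ with $|\mu|\le n$, $n-|\mu|$ even; those with $|\mu|=n$ are those factoring through $\mathbf{k}\mathfrak{S}_n=Br_n(m)/(p_{12})$, and restriction from $Br_n(m)$ to $Br_{n-1}(m)$ follows the rule $\mathrm{Res}\,\rho_\lambda=\sum_{\mu\nearrow\lambda}\rho_\mu+\sum_{\lambda\nearrow\mu}\rho_\mu$, where $\mu\nearrow\lambda$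 means $\lambda$ is obtained from $\mu$ by adding one box. *)

theory Defs
  imports "Jordan_Normal_Form.Spectral_Radius"
begin

text \<open>A point of a Brauer diagram on n top and n bottom points is a pair (b, i)
  with i < n; b = True means a top point, b = False a bottom point.
  A Brauer diagram is a fixed-point-free involution d on these 2n points
  (d p is the point joined to p); outside the 2n points d is the identity
  (normalisation, so that diagrams are uniquely represented).\<close>

type_synonym bpoint = "bool \<times> nat"
type_synonym bdiagram = "bpoint \<Rightarrow> bpoint"

definition bpoints :: "nat \<Rightarrow> bpoint set" where
  "bpoints n = UNIV \<times> {..<n}"

definition brauer_diagrams :: "nat \<Rightarrow> bdiagram set" where
  "brauer_diagrams n = {d. (\<forall>p\<in>bpoints n. d p \<in> bpoints n \<and> d p \<noteq> p \<and> d (d p) = p)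
                          \<and> (\<forall>p. p \<notin> bpoints n \<longrightarrow> d p = p)}"

text \<open>Stacking: d1 on top of d2.  The graph has three layers of vertices
  (layer, i): layer 0 = top row of d1, layer 1 = bottom row of d1 identified
  with top row of d2, layer 2 = bottom row of d2.\<close>

definition emb_upper :: "bpoint \<Rightarrow> nat \<times> nat" where
  "emb_upper p = (if fst p then (0, snd p) else (1, snd p))"

definition emb_lower :: "bpoint \<Rightarrow> nat \<times> nat" where
  "emb_lower p = (if fst p then (1, snd p) else (2, snd p))"

definition emb_outer :: "bpoint \<Rightarrow> nat \<times> nat" where
  "emb_outer p = (if fst p then (0, snd p) else (2, snd p))"

definition stack_edges :: "nat \<Rightarrow> bdiagram \<Rightarrow> bdiagram \<Rightarrow> ((nat \<times> nat) \<times> (nat \<times> nat)) set" where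
  "stack_edges n d1 d2 =
     {(emb_upper p, emb_upper (d1 p)) | p. p \<in> bpoints n} \<union>
     {(emb_lower p, emb_lower (d2 p)) | p. p \<in> bpoints n}"

definition stack_conn :: "nat \<Rightarrow> bdiagram \<Rightarrow> bdiagram \<Rightarrow> ((nat \<times> nat) \<times> (nat \<times> nat)) set" where
  "stack_conn n d1 d2 = (stack_edges n d1 d2 \<union> (stack_edges n d1 d2)\<inverse>)\<^sup>*"

definition bcompose :: "nat \<Rightarrow> bdiagram \<Rightarrow> bdiagram \<Rightarrow> bdiagram" where
  "bcompose n d1 d2 = (\<lambda>p. if p \<in> bpoints n then
       (THE q. q \<in> bpoints n \<and> q \<noteq> p \<and> (emb_outer p, emb_outer q) \<in> stack_conn n d1 d2)
     else p)"

text \<open>Number of closed loops: connected components lying entirely in the middle layer.\<close>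

definition bloops :: "nat \<Rightarrow> bdiagram \<Rightarrow> bdiagram \<Rightarrow> nat" where
  "bloops n d1 d2 = card {stack_conn n d1 d2 `` {(1, i)} | i. i < n \<and>
                           stack_conn n d1 d2 `` {(1, i)} \<subseteq> {1} \<times> UNIV}"

text \<open>Special diagrams: identity, s_12 (transposition of strands 1,2), p_12.
  Strands are indexed from 0, so "1,2" are the indices 0,1.\<close>

definition bid :: "nat \<Rightarrow> bdiagram" where
  "bid n = (\<lambda>p. if p \<in> bpoints n then (\<not> fst p, snd p) else p)"

definition bs12 :: "nat \<Rightarrow> bdiagram" where
  "bs12 n = (\<lambda>p. if p \<in> bpoints n then
      (\<not> fst p, if snd p = 0 then 1 else if snd p = 1 then 0 else snd p) else p)"

definition bp12 :: "nat \<Rightarrow> bdiagram" where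
  "bp12 n = (\<lambda>p. if p \<in> bpoints n then
      (if snd p = 0 then (fst p, 1) else if snd p = 1 then (fst p, 0) else (\<not> fst p, snd p))
    else p)"

text \<open>A (matrix) representation of Br_n(m) on k^N is given by the images of the
  basis diagrams; by linear extension this is the same as an algebra homomorphism
  Br_n(m) \<rightarrow> End(k^N): it must be unital and respect the product of
  basis elements d1 d2 = m^(loops) (d1 \<circ> d2).\<close>

definition brauer_rep :: "nat \<Rightarrow> 'k::field \<Rightarrow> nat \<Rightarrow> (bdiagram \<Rightarrow> 'k mat) \<Rightarrow> bool" where
  "brauer_rep n m N \<rho> \<longleftrightarrow>
     (\<forall>d\<in>brauer_diagrams n. \<rho> d \<in> carrier_mat N N) \<and>
     \<rho> (bid n) = 1\<^sub>m N \<and>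
     (\<forall>d1\<in>brauer_diagrams n. \<forall>d2\<in>brauer_diagrams n.
        \<rho> d1 * \<rho> d2 = (m ^ bloops n d1 d2) \<cdot>\<^sub>m \<rho> (bcompose n d1 d2))"

definition invariant_subspace :: "nat \<Rightarrow> nat \<Rightarrow> (bdiagram \<Rightarrow> 'k::field mat) \<Rightarrow> 'k vec set \<Rightarrow> bool" where
  "invariant_subspace n N \<rho> W \<longleftrightarrow>
     W \<subseteq> carrier_vec N \<and> 0\<^sub>v N \<in> W \<and>
     (\<forall>v\<in>W. \<forall>w\<in>W. v + w \<in> W) \<and> (\<forall>c. \<forall>v\<in>W. c \<cdot>\<^sub>v v \<in> W) \<and>
     (\<forall>d\<in>brauer_diagrams n. \<forall>v\<in>W. \<rho> d *\<^sub>v v \<in> W)"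

definition irreducible_brauer_rep :: "nat \<Rightarrow> 'k::field \<Rightarrow> nat \<Rightarrow> (bdiagram \<Rightarrow> 'k mat) \<Rightarrow> bool" where
  "irreducible_brauer_rep n m N \<rho> \<longleftrightarrow>
     brauer_rep n m N \<rho> \<and> N > 0 \<and>
     (\<forall>W. invariant_subspace n N \<rho> W \<longrightarrow> W = {0\<^sub>v N} \<or> W = carrier_vec N)"

text \<open>The representation factors through Br_n(m)/(p_12), i.e. it vanishes on the
  two-sided ideal generated by p_12, which is spanned by the elements d1 p_12 d2.\<close>

definition factors_through_sym :: "nat \<Rightarrow> nat \<Rightarrow> (bdiagram \<Rightarrow> 'k::field mat) \<Rightarrow> bool" where
  "factors_through_sym n N \<rho> \<longleftrightarrow>
     (\<forall>d1\<in>brauer_diagrams n. \<forall>d2\<in>brauer_diagrams n. \<rho> d1 * \<rho> (bp12 n) * \<rho> d2 = 0\<^sub>m N N)"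

definition rep_t12 :: "nat \<Rightarrow> (bdiagram \<Rightarrow> 'k::field mat) \<Rightarrow> 'k mat" where
  "rep_t12 n \<rho> = \<rho> (bs12 n) - \<rho> (bp12 n)"

text \<open>Partitions as weakly decreasing lists of positive integers; parts and the
  conjugate partition are 1-indexed, with parts beyond the length equal to 0.\<close>

definition is_partition :: "nat list \<Rightarrow> bool" where
  "is_partition \<mu> \<longleftrightarrow> sorted_wrt (\<ge>) \<mu> \<and> (\<forall>x\<in>set \<mu>. x > 0)"

definition part :: "nat list \<Rightarrow> nat \<Rightarrow> nat" where
  "part \<mu> i = (if 1 \<le> i \<and> i \<le> length \<mu> then \<mu> ! (i - 1) else 0)"

definition conj_part :: "nat list \<Rightarrow> nat \<Rightarrow> nat" where
  "conj_part \<mu> j = card {i. 1 \<le> i \<and> i \<le> length \<mu> \<and> j \<le> part \<mu> i}"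

definition boxes :: "nat list \<Rightarrow> (nat \<times> nat) set" where
  "boxes \<mu> = {(i, j). 1 \<le> i \<and> i \<le> length \<mu> \<and> 1 \<le> j \<and> j \<le> part \<mu> i}"

definition hook :: "nat list \<Rightarrow> nat \<times> nat \<Rightarrow> nat" where
  "hook \<mu> b = (case b of (i, j) \<Rightarrow> part \<mu> i - j + conj_part \<mu> j - i + 1)"

text \<open>El Samra--King: the factor attached to box (i,j) is
  x + mu_i + mu_j - i - j  if i \<le> j, and  x - mu'_i - mu'_j + i + j - 2  if i > j.\<close>

definition oshift :: "nat list \<Rightarrow> nat \<times> nat \<Rightarrow> int" where
  "oshift \<mu> b = (case b of (i, j) \<Rightarrow>
     if i \<le> j then int (part \<mu> i) + int (part \<mu> j) - int i - int j
     else int i + int j - 2 - int (conj_part \<mu> i) - int (conj_part \<mu> j))"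

text \<open>P_mu \<in> Q[x]: the polynomial giving, for all large integers m, the dimension
  of the irreducible O(m)-module indexed by mu (El Samra--King formula).\<close>

definition P_O :: "nat list \<Rightarrow> rat poly" where
  "P_O \<mu> = Polynomial.smult (1 / of_nat (\<Prod>b\<in>boxes \<mu>. hook \<mu> b))
                  (\<Prod>b\<in>boxes \<mu>. [: of_int (oshift \<mu> b), 1 :])"

definition S_set :: "nat \<Rightarrow> int set" where
  "S_set n = {z. \<exists>\<mu>. is_partition \<mu> \<and> sum_list \<mu> \<le> n \<and> even (n - sum_list \<mu>)
                    \<and> poly (P_O \<mu>) (of_int z) = 0}"

end

theory Submission
  imports Defs "HOL-Combinatorics.Transposition"
begin

text \<open>In any representation the images S, P, B of s_12, p_12, s_23 satisfy S S = B B = 1,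
  P P = m P, S P = P S = P, P B P = P and S B S = B S B; these follow by computing the corresponding
  products of diagrams. If (S - P) v = k v, applying P gives (1 - m) P v = k P v, so either P v = 0,
  whence S v = k v and k = \<plusminus>1, or k = 1 - m. In the latter case put u = P v \<noteq> 0, w = B u and
  a = S w: the braid relation gives B a = a, and w - a and m (w + a) - 2 u are eigenvectors of S for
  -1 and 1 annihilated by P, hence eigenvectors of S - P. They are nonzero because m \<noteq> 1 and
  m \<noteq> -2, which are zeros of P_(2), P_(3) or P_(2,1) and therefore lie in S_n.\<close>

section \<open>The stacking graph\<close>

lemma mem_bpoints [simp]: "(b, i) \<in> bpoints n \<longleftrightarrow> i < n"
  by (simp add: bpoints_def)

lemma brauer_diagramsD:
  assumes "d \<in> brauer_diagrams n" "p \<in> bpoints n"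
  shows "d p \<in> bpoints n" "d p \<noteq> p" "d (d p) = p"
  using assms unfolding brauer_diagrams_def by blast+

lemma brauer_diagram_outside: "d \<in> brauer_diagrams n \<Longrightarrow> p \<notin> bpoints n \<Longrightarrow> d p = p"
  unfolding brauer_diagrams_def by (cases p) auto

lemma stack_conn_upperI:
  "p \<in> bpoints n \<Longrightarrow> x = emb_upper p \<Longrightarrow> y = emb_upper (d1 p) \<Longrightarrow> (x, y) \<in> stack_conn n d1 d2"
  unfolding stack_conn_def stack_edges_def by blast

lemma stack_conn_lowerI:
  "p \<in> bpoints n \<Longrightarrow> x = emb_lower p \<Longrightarrow> y = emb_lower (d2 p) \<Longrightarrow> (x, y) \<in> stack_conn n d1 d2"
  unfolding stack_conn_def stack_edges_def by blast

lemma stack_conn_sym: "(x, y) \<in> stack_conn n d1 d2 \<Longrightarrow> (y, x) \<in> stack_conn n d1 d2"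
  unfolding stack_conn_def by (metis converse_Un converse_converse rtrancl_converseI sup_commute)

lemma stack_conn_trans:
  "(x, y) \<in> stack_conn n d1 d2 \<Longrightarrow> (y, z) \<in> stack_conn n d1 d2 \<Longrightarrow> (x, z) \<in> stack_conn n d1 d2"
  unfolding stack_conn_def by (rule rtrancl_trans)

lemma stack_conn_Image_eq:
  assumes "(x, y) \<in> stack_conn n d1 d2"
  shows "stack_conn n d1 d2 `` {x} = stack_conn n d1 d2 `` {y}"
  using stack_conn_trans[OF assms] stack_conn_trans[OF stack_conn_sym[OF assms]] by blast

lemma stack_conn_label_eq:
  assumes "(x, y) \<in> stack_conn n d1 d2"
    and upper: "\<And>p. p \<in> bpoints n \<Longrightarrow> c (emb_upper (d1 p)) = c (emb_upper p)"
    and lower: "\<And>p. p \<in> bpoints n \<Longrightarrow> c (emb_lower (d2 p)) = c (emb_lower p)"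
  shows "c y = c x"
proof -
  have edge: "c z = c y" if "(y, z) \<in> stack_edges n d1 d2" for y z
  proof -
    from that obtain p where "p \<in> bpoints n"
      and "(y = emb_upper p \<and> z = emb_upper (d1 p)) \<or> (y = emb_lower p \<and> z = emb_lower (d2 p))"
      unfolding stack_edges_def by blast
    then show ?thesis using upper lower by blast
  qed
  show ?thesis
    using assms(1) unfolding stack_conn_def
  proof (induction rule: rtrancl_induct)
    case (step y z)
    then show ?case using edge[of y z] edge[of z y] by auto
  qed simp
qed

lemma stack_conn_top_arc:
  "p \<in> bpoints n \<Longrightarrow> fst p \<Longrightarrow> fst (d1 p) \<Longrightarrow> (emb_outer p, emb_outer (d1 p)) \<in> stack_conn n d1 d2"
  by (rule stack_conn_upperI) (auto simp: emb_outer_def emb_upper_def)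

lemma stack_conn_bottom_arc:
  "p \<in> bpoints n \<Longrightarrow> \<not> fst p \<Longrightarrow> \<not> fst (d2 p) \<Longrightarrow> (emb_outer p, emb_outer (d2 p)) \<in> stack_conn n d1 d2"
  by (rule stack_conn_lowerI) (auto simp: emb_outer_def emb_lower_def)

lemma stack_conn_vertical:
  assumes "i < n" "d1 (True, i) = (False, i)" "d2 (True, i) = (False, i)"
  shows "((0, i), (2, i)) \<in> stack_conn n d1 d2" "((2, i), (0, i)) \<in> stack_conn n d1 d2"
proof -
  have "((0, i), (1, i)) \<in> stack_conn n d1 d2"
    using assms by (intro stack_conn_upperI[where p = "(True, i)"]) (simp_all add: emb_upper_def)
  moreover have "((1, i), (2, i)) \<in> stack_conn n d1 d2"
    using assms by (intro stack_conn_lowerI[where p = "(True, i)"]) (simp_all add: emb_lower_def)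
  ultimately show "((0, i), (2, i)) \<in> stack_conn n d1 d2" by (rule stack_conn_trans)
  then show "((2, i), (0, i)) \<in> stack_conn n d1 d2" by (rule stack_conn_sym)
qed

lemma bcompose_eqI:
  assumes "p \<in> bpoints n" "q \<in> bpoints n" "q \<noteq> p"
    and "(emb_outer p, emb_outer q) \<in> stack_conn n d1 d2"
    and "\<And>q'. q' \<in> bpoints n \<Longrightarrow> q' \<noteq> p \<Longrightarrow> (emb_outer p, emb_outer q') \<in> stack_conn n d1 d2 \<Longrightarrow> q' = q"
  shows "bcompose n d1 d2 p = q"
proof -
  have "(THE q'. q' \<in> bpoints n \<and> q' \<noteq> p \<and> (emb_outer p, emb_outer q') \<in> stack_conn n d1 d2) = q"
    by (rule the_equality) (use assms in blast)+
  then show ?thesis using assms(1) by (simp add: bcompose_def)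
qed

text \<open>A labelling constant along edges is constant on components, so it certifies that an outer
  point is connected to no outer point other than its partner under d.\<close>

lemma bcompose_eq_by_label:
  assumes d: "d \<in> brauer_diagrams n"
    and upper: "\<And>p. p \<in> bpoints n \<Longrightarrow> c (emb_upper (d1 p)) = c (emb_upper p)"
    and lower: "\<And>p. p \<in> bpoints n \<Longrightarrow> c (emb_lower (d2 p)) = c (emb_lower p)"
    and path: "\<And>p. p \<in> bpoints n \<Longrightarrow> (emb_outer p, emb_outer (d p)) \<in> stack_conn n d1 d2"
    and separate: "\<And>p q. p \<in> bpoints n \<Longrightarrow> q \<in> bpoints n \<Longrightarrow> q \<noteq> p \<Longrightarrow>
                     c (emb_outer q) = c (emb_outer p) \<Longrightarrow> q = d p"
  shows "bcompose n d1 d2 = d"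
proof
  fix p
  show "bcompose n d1 d2 p = d p"
  proof (cases "p \<in> bpoints n")
    case True
    show ?thesis
    proof (rule bcompose_eqI)
      fix q assume "q \<in> bpoints n" "q \<noteq> p" "(emb_outer p, emb_outer q) \<in> stack_conn n d1 d2"
      then show "q = d p"
        using separate True stack_conn_label_eq[of _ _ n d1 d2 c] upper lower by metis
    qed (use True d path brauer_diagramsD in auto)
  next
    case False
    then show ?thesis using brauer_diagram_outside[OF d False] by (simp add: bcompose_def False)
  qed
qed

lemma bloops_eq_0I:
  assumes "\<And>i. i < n \<Longrightarrow> \<exists>x. ((1, i), x) \<in> stack_conn n d1 d2 \<and> fst x \<noteq> 1"
  shows "bloops n d1 d2 = 0"
proof -
  have "\<not> stack_conn n d1 d2 `` {(1, i)} \<subseteq> {1} \<times> UNIV" if "i < n" for i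
    using assms[OF that] by force
  then show ?thesis unfolding bloops_def by (simp add: Collect_conj_eq)
qed

section \<open>Permutation diagrams\<close>

definition perm_pair :: "nat \<Rightarrow> (nat \<Rightarrow> nat) \<Rightarrow> (nat \<Rightarrow> nat) \<Rightarrow> bool" where
  "perm_pair n f g \<longleftrightarrow> (\<forall>i<n. f i < n \<and> g i < n \<and> g (f i) = i \<and> f (g i) = i)"

definition perm_diagram :: "nat \<Rightarrow> (nat \<Rightarrow> nat) \<Rightarrow> (nat \<Rightarrow> nat) \<Rightarrow> bdiagram" where
  "perm_diagram n f g =
     (\<lambda>p. if p \<in> bpoints n then (if fst p then (False, f (snd p)) else (True, g (snd p))) else p)"

definition permute_row :: "bool \<Rightarrow> (nat \<Rightarrow> nat) \<Rightarrow> bpoint \<Rightarrow> bpoint" where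
  "permute_row b f p = (if fst p = b then (b, f (snd p)) else p)"

lemma perm_pair_comp: "perm_pair n f f' \<Longrightarrow> perm_pair n g g' \<Longrightarrow> perm_pair n (g \<circ> f) (f' \<circ> g')"
  by (auto simp: perm_pair_def)

lemma perm_pair_transpose: "a < n \<Longrightarrow> b < n \<Longrightarrow> perm_pair n (transpose a b) (transpose a b)"
  by (auto simp: perm_pair_def transpose_def)

lemma perm_diagram_in_brauer: "perm_pair n f g \<Longrightarrow> perm_diagram n f g \<in> brauer_diagrams n"
  unfolding brauer_diagrams_def perm_pair_def perm_diagram_def bpoints_def by auto

lemma bid_eq_perm_diagram: "bid n = perm_diagram n id id"
  by (auto simp: bid_def perm_diagram_def)

lemma bs12_eq_perm_diagram: "bs12 n = perm_diagram n (transpose 0 1) (transpose 0 1)"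
  by (auto simp: bs12_def perm_diagram_def transpose_def)

definition conjugate_diagram :: "nat \<Rightarrow> (bpoint \<Rightarrow> bpoint) \<Rightarrow> (bpoint \<Rightarrow> bpoint) \<Rightarrow> bdiagram \<Rightarrow> bdiagram" where
  "conjugate_diagram n h h' d = (\<lambda>p. if p \<in> bpoints n then h' (d (h p)) else p)"

lemma conjugate_diagram_in_brauer:
  assumes d: "d \<in> brauer_diagrams n"
    and h: "\<And>p. p \<in> bpoints n \<Longrightarrow> h p \<in> bpoints n"
    and h': "\<And>p. p \<in> bpoints n \<Longrightarrow> h' p \<in> bpoints n"
    and h'_h: "\<And>p. p \<in> bpoints n \<Longrightarrow> h' (h p) = p"
    and h_h': "\<And>p. p \<in> bpoints n \<Longrightarrow> h (h' p) = p"
  shows "conjugate_diagram n h h' d \<in> brauer_diagrams n"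
proof -
  let ?c = "conjugate_diagram n h h' d"
  have "?c p \<in> bpoints n \<and> ?c p \<noteq> p \<and> ?c (?c p) = p" if p: "p \<in> bpoints n" for p
  proof -
    note hp = h[OF p]
    note dhp = brauer_diagramsD[OF d hp]
    have cp: "?c p = h' (d (h p))" using p by (simp add: conjugate_diagram_def)
    have c_mem: "?c p \<in> bpoints n" using h'[OF dhp(1)] cp by simp
    have h_cp: "h (?c p) = d (h p)" using h_h'[OF dhp(1)] cp by simp
    have "?c p \<noteq> p" using h_cp dhp(2) by auto
    moreover have "?c (?c p) = p"
      using c_mem h_cp dhp(3) h'_h[OF p] by (simp add: conjugate_diagram_def)
    ultimately show ?thesis using c_mem by blast
  qed
  moreover have "?c p = p" if "p \<notin> bpoints n" for p
    using that by (simp add: conjugate_diagram_def)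
  ultimately show ?thesis unfolding brauer_diagrams_def by blast
qed

text \<open>Stacking d with a permutation diagram only relabels the row of d that meets the permutation.
  \<Phi> projects the vertices of the stacking graph to points of d, collapsing the permutation strands,
  and the unordered pair of a point and its d-partner labels the components.\<close>

lemma bcompose_eq_conjugate:
  assumes d: "d \<in> brauer_diagrams n"
    and h: "\<And>p. p \<in> bpoints n \<Longrightarrow> h p \<in> bpoints n"
    and h': "\<And>p. p \<in> bpoints n \<Longrightarrow> h' p \<in> bpoints n"
    and h'_h: "\<And>p. p \<in> bpoints n \<Longrightarrow> h' (h p) = p"
    and h_h': "\<And>p. p \<in> bpoints n \<Longrightarrow> h (h' p) = p"
    and outer: "\<And>p. p \<in> bpoints n \<Longrightarrow> \<Phi> (emb_outer p) = h p"
    and upper: "\<And>p. p \<in> bpoints n \<Longrightarrow>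
       {\<Phi> (emb_upper (d1 p)), d (\<Phi> (emb_upper (d1 p)))} = {\<Phi> (emb_upper p), d (\<Phi> (emb_upper p))}"
    and lower: "\<And>p. p \<in> bpoints n \<Longrightarrow>
       {\<Phi> (emb_lower (d2 p)), d (\<Phi> (emb_lower (d2 p)))} = {\<Phi> (emb_lower p), d (\<Phi> (emb_lower p))}"
    and attach: "\<And>p. p \<in> bpoints n \<Longrightarrow> (emb_outer p, E (h p)) \<in> stack_conn n d1 d2"
    and inner: "\<And>p. p \<in> bpoints n \<Longrightarrow> (E p, E (d p)) \<in> stack_conn n d1 d2"
  shows "bcompose n d1 d2 = conjugate_diagram n h h' d"
proof (rule bcompose_eq_by_label[where c = "\<lambda>v. {\<Phi> v, d (\<Phi> v)}"])
  show "conjugate_diagram n h h' d \<in> brauer_diagrams n"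
    by (rule conjugate_diagram_in_brauer[OF d h h' h'_h h_h'])
next
  fix p assume p: "p \<in> bpoints n"
  note dhp = brauer_diagramsD(1)[OF d h[OF p]]
  have "(emb_outer p, E (d (h p))) \<in> stack_conn n d1 d2"
    using stack_conn_trans[OF attach[OF p] inner[OF h[OF p]]] .
  moreover have "(E (d (h p)), emb_outer (h' (d (h p)))) \<in> stack_conn n d1 d2"
    using stack_conn_sym[OF attach[OF h'[OF dhp]]] h_h'[OF dhp] by simp
  ultimately show "(emb_outer p, emb_outer (conjugate_diagram n h h' d p)) \<in> stack_conn n d1 d2"
    using p stack_conn_trans by (simp add: conjugate_diagram_def)
next
  fix p q assume p: "p \<in> bpoints n" and q: "q \<in> bpoints n" and "q \<noteq> p"
    and "{\<Phi> (emb_outer q), d (\<Phi> (emb_outer q))} = {\<Phi> (emb_outer p), d (\<Phi> (emb_outer p))}"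
  then have "{h q, d (h q)} = {h p, d (h p)}" using outer by simp
  moreover have "h q \<noteq> h p" using h'_h[OF p] h'_h[OF q] \<open>q \<noteq> p\<close> by auto
  ultimately have "h q = d (h p)" by (auto simp: doubleton_eq_iff)
  then show "q = conjugate_diagram n h h' d p"
    using h'_h[OF q] p by (simp add: conjugate_diagram_def)
qed (use upper lower in simp_all)

lemma bcompose_perm_diagram_left:
  assumes f: "perm_pair n f g" and d: "d \<in> brauer_diagrams n"
  shows "bcompose n (perm_diagram n f g) d = conjugate_diagram n (permute_row True f) (permute_row True g) d"
proof -
  define \<Phi> :: "nat \<times> nat \<Rightarrow> bpoint"
    where "\<Phi> = (\<lambda>(l, i). if l = 0 then (True, f i) else if l = 1 then (True, i) else (False, i))"
  have perm: "f i < n" "g i < n" "g (f i) = i" "f (g i) = i" if "i < n" for i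
    using f that by (auto simp: perm_pair_def)
  have \<Phi>_lower: "\<Phi> (emb_lower q) = q" for q
    by (cases q) (simp add: \<Phi>_def emb_lower_def)
  show ?thesis
  proof (rule bcompose_eq_conjugate[OF d, where \<Phi> = \<Phi> and E = emb_lower])
    fix p :: bpoint assume "p \<in> bpoints n"
    then obtain b i where p: "p = (b, i)" and i: "i < n" by (cases p) auto
    note fi = perm[OF i]
    show "permute_row True f p \<in> bpoints n" "permute_row True g p \<in> bpoints n"
      "permute_row True g (permute_row True f p) = p" "permute_row True f (permute_row True g p) = p"
      using fi p i by (simp_all add: permute_row_def)
    show "\<Phi> (emb_outer p) = permute_row True f p"
      using p by (simp add: \<Phi>_def emb_outer_def permute_row_def)
    have "\<Phi> (emb_upper (perm_diagram n f g p)) = \<Phi> (emb_upper p)"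
      using fi p by (simp add: \<Phi>_def emb_upper_def perm_diagram_def)
    then show "{\<Phi> (emb_upper (perm_diagram n f g p)), d (\<Phi> (emb_upper (perm_diagram n f g p)))} =
               {\<Phi> (emb_upper p), d (\<Phi> (emb_upper p))}"
      by simp
    show "{\<Phi> (emb_lower (d p)), d (\<Phi> (emb_lower (d p)))} = {\<Phi> (emb_lower p), d (\<Phi> (emb_lower p))}"
      using brauer_diagramsD(3)[OF d \<open>p \<in> bpoints n\<close>] by (auto simp: \<Phi>_lower)
    show "(emb_outer p, emb_lower (permute_row True f p)) \<in> stack_conn n (perm_diagram n f g) d"
    proof (cases b)
      case True
      then show ?thesis using fi p i
        by (intro stack_conn_upperI[where p = p])
           (simp_all add: emb_outer_def emb_upper_def emb_lower_def permute_row_def perm_diagram_def)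
    next
      case False
      then show ?thesis using p
        by (simp add: emb_outer_def emb_lower_def permute_row_def stack_conn_def)
    qed
    show "(emb_lower p, emb_lower (d p)) \<in> stack_conn n (perm_diagram n f g) d"
      using \<open>p \<in> bpoints n\<close> by (rule stack_conn_lowerI) simp_all
  qed
qed

lemma bcompose_perm_diagram_right:
  assumes f: "perm_pair n f g" and d: "d \<in> brauer_diagrams n"
  shows "bcompose n d (perm_diagram n f g) = conjugate_diagram n (permute_row False g) (permute_row False f) d"
proof -
  define \<Phi> :: "nat \<times> nat \<Rightarrow> bpoint"
    where "\<Phi> = (\<lambda>(l, i). if l = 0 then (True, i) else if l = 1 then (False, i) else (False, g i))"
  have perm: "f i < n" "g i < n" "g (f i) = i" "f (g i) = i" if "i < n" for i
    using f that by (auto simp: perm_pair_def)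
  have \<Phi>_upper: "\<Phi> (emb_upper q) = q" for q
    by (cases q) (simp add: \<Phi>_def emb_upper_def)
  show ?thesis
  proof (rule bcompose_eq_conjugate[OF d, where \<Phi> = \<Phi> and E = emb_upper])
    fix p :: bpoint assume "p \<in> bpoints n"
    then obtain b i where p: "p = (b, i)" and i: "i < n" by (cases p) auto
    note fi = perm[OF i]
    show "permute_row False g p \<in> bpoints n" "permute_row False f p \<in> bpoints n"
      "permute_row False f (permute_row False g p) = p" "permute_row False g (permute_row False f p) = p"
      using fi p i by (simp_all add: permute_row_def)
    show "\<Phi> (emb_outer p) = permute_row False g p"
      using p by (simp add: \<Phi>_def emb_outer_def permute_row_def)
    show "{\<Phi> (emb_upper (d p)), d (\<Phi> (emb_upper (d p)))} = {\<Phi> (emb_upper p), d (\<Phi> (emb_upper p))}"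
      using brauer_diagramsD(3)[OF d \<open>p \<in> bpoints n\<close>] by (auto simp: \<Phi>_upper)
    have "\<Phi> (emb_lower (perm_diagram n f g p)) = \<Phi> (emb_lower p)"
      using fi p i by (simp add: \<Phi>_def emb_lower_def perm_diagram_def)
    then show "{\<Phi> (emb_lower (perm_diagram n f g p)), d (\<Phi> (emb_lower (perm_diagram n f g p)))} =
               {\<Phi> (emb_lower p), d (\<Phi> (emb_lower p))}"
      by simp
    show "(emb_outer p, emb_upper (permute_row False g p)) \<in> stack_conn n d (perm_diagram n f g)"
    proof (cases b)
      case True
      then show ?thesis using p
        by (simp add: emb_outer_def emb_upper_def permute_row_def stack_conn_def)
    next
      case False
      then show ?thesis using fi p i
        by (intro stack_conn_lowerI[where p = p])
           (simp_all add: emb_outer_def emb_upper_def emb_lower_def permute_row_def perm_diagram_def)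
    qed
    show "(emb_upper p, emb_upper (d p)) \<in> stack_conn n d (perm_diagram n f g)"
      using \<open>p \<in> bpoints n\<close> by (rule stack_conn_upperI) simp_all
  qed
qed

lemma bcompose_perm_diagram:
  assumes "perm_pair n f f'" "perm_pair n g g'"
  shows "bcompose n (perm_diagram n f f') (perm_diagram n g g') = perm_diagram n (g \<circ> f) (f' \<circ> g')"
proof -
  have "conjugate_diagram n (permute_row True f) (permute_row True f') (perm_diagram n g g') p =
        perm_diagram n (g \<circ> f) (f' \<circ> g') p" for p
    using assms by (cases p) (auto simp: conjugate_diagram_def permute_row_def perm_diagram_def perm_pair_def)
  then show ?thesis
    using bcompose_perm_diagram_left[OF assms(1) perm_diagram_in_brauer[OF assms(2)]] by auto
qed

lemma bloops_perm_diagram_left: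
  assumes "perm_pair n f g"
  shows "bloops n (perm_diagram n f g) d = 0"
proof (rule bloops_eq_0I)
  fix i assume "i < n"
  then have "((1, i), (0, g i)) \<in> stack_conn n (perm_diagram n f g) d"
    using assms by (intro stack_conn_upperI[where p = "(False, i)"])
      (simp_all add: emb_upper_def perm_diagram_def perm_pair_def)
  then show "\<exists>x. ((1, i), x) \<in> stack_conn n (perm_diagram n f g) d \<and> fst x \<noteq> 1"
    by force
qed

lemma bloops_perm_diagram_right:
  assumes "perm_pair n f g"
  shows "bloops n d (perm_diagram n f g) = 0"
proof (rule bloops_eq_0I)
  fix i assume "i < n"
  then have "((1, i), (2, f i)) \<in> stack_conn n d (perm_diagram n f g)"
    using assms by (intro stack_conn_lowerI[where p = "(True, i)"])
      (simp_all add: emb_lower_def perm_diagram_def perm_pair_def)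
  then show "\<exists>x. ((1, i), x) \<in> stack_conn n d (perm_diagram n f g) \<and> fst x \<noteq> 1"
    by force
qed

definition bs23 :: "nat \<Rightarrow> bdiagram" where
  "bs23 n = perm_diagram n (transpose 1 2) (transpose 1 2)"

text \<open>The product s_23 p_12 (strands indexed from 0): it joins top 0 to top 2, top 1 to bottom 2
  and bottom 0 to bottom 1; the remaining strands are vertical.\<close>

definition bs23_p12 :: "nat \<Rightarrow> bdiagram" where
  "bs23_p12 n = (\<lambda>p. if p \<in> bpoints n then
     (if fst p then (if snd p = 0 then (True, 2) else if snd p = 2 then (True, 0)
                     else if snd p = 1 then (False, 2) else (False, snd p))
      else (if snd p = 2 then (True, 1) else if snd p = 0 then (False, 1)
            else if snd p = 1 then (False, 0) else (True, snd p)))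
    else p)"

lemma bp12_in_brauer: "2 \<le> n \<Longrightarrow> bp12 n \<in> brauer_diagrams n"
  unfolding brauer_diagrams_def bp12_def bpoints_def by auto

lemma bs23_p12_in_brauer: "3 \<le> n \<Longrightarrow> bs23_p12 n \<in> brauer_diagrams n"
  unfolding brauer_diagrams_def bs23_p12_def bpoints_def by auto

lemma conjugate_diagram_bp12_transpose:
  assumes "2 \<le> n"
  shows "conjugate_diagram n (permute_row b (transpose 0 1)) (permute_row b (transpose 0 1)) (bp12 n) = bp12 n"
proof
  fix p :: bpoint
  show "conjugate_diagram n (permute_row b (transpose 0 1)) (permute_row b (transpose 0 1)) (bp12 n) p = bp12 n p"
    using assms by (cases p) (auto simp: conjugate_diagram_def permute_row_def bp12_def transpose_def)
qed

lemma bcompose_bs12_bp12: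
  assumes "2 \<le> n"
  shows "bcompose n (bs12 n) (bp12 n) = bp12 n"
proof -
  have "bcompose n (bs12 n) (bp12 n) =
        conjugate_diagram n (permute_row True (transpose 0 1)) (permute_row True (transpose 0 1)) (bp12 n)"
    unfolding bs12_eq_perm_diagram using assms
    by (intro bcompose_perm_diagram_left perm_pair_transpose bp12_in_brauer) simp_all
  then show ?thesis using conjugate_diagram_bp12_transpose[OF assms] by simp
qed

lemma bcompose_bp12_bs12:
  assumes "2 \<le> n"
  shows "bcompose n (bp12 n) (bs12 n) = bp12 n"
proof -
  have "bcompose n (bp12 n) (bs12 n) =
        conjugate_diagram n (permute_row False (transpose 0 1)) (permute_row False (transpose 0 1)) (bp12 n)"
    unfolding bs12_eq_perm_diagram using assms
    by (intro bcompose_perm_diagram_right perm_pair_transpose bp12_in_brauer) simp_all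
  then show ?thesis using conjugate_diagram_bp12_transpose[OF assms] by simp
qed

lemma bcompose_bs23_bp12:
  assumes "3 \<le> n"
  shows "bcompose n (bs23 n) (bp12 n) = bs23_p12 n"
proof -
  have "conjugate_diagram n (permute_row True (transpose 1 2)) (permute_row True (transpose 1 2)) (bp12 n)
        = bs23_p12 n"
  proof
    fix p :: bpoint
    show "conjugate_diagram n (permute_row True (transpose 1 2)) (permute_row True (transpose 1 2)) (bp12 n) p
          = bs23_p12 n p"
      using assms by (cases p) (auto simp: conjugate_diagram_def permute_row_def bp12_def bs23_p12_def transpose_def)
  qed
  then show ?thesis
    unfolding bs23_def using assms
    by (subst bcompose_perm_diagram_left) (simp_all add: perm_pair_transpose bp12_in_brauer)
qed

lemma bcompose_bp12_bp12:
  assumes n: "2 \<le> n"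
  shows "bcompose n (bp12 n) (bp12 n) = bp12 n"
proof (rule bcompose_eq_by_label[where c = "\<lambda>(l, i). if i < 2 then Inl l else Inr i"])
  show "bp12 n \<in> brauer_diagrams n" using n by (rule bp12_in_brauer)
next
  fix p :: bpoint assume p: "p \<in> bpoints n"
  show "(emb_outer p, emb_outer (bp12 n p)) \<in> stack_conn n (bp12 n) (bp12 n)"
  proof (cases "snd p < 2")
    case True
    then have "fst (bp12 n p) = fst p" using p by (simp add: bp12_def)
    then show ?thesis using p
      by (cases "fst p") (simp_all add: stack_conn_top_arc stack_conn_bottom_arc)
  next
    case False
    obtain b i where "p = (b, i)" "i < n" using p by (cases p) auto
    then show ?thesis using False stack_conn_vertical[of i n "bp12 n" "bp12 n"]
      by (cases b) (simp_all add: bp12_def emb_outer_def)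
  qed
qed (use n in \<open>auto simp: bp12_def emb_upper_def emb_lower_def emb_outer_def bpoints_def split: if_splits\<close>)

lemma bloops_bp12_bp12:
  assumes n: "2 \<le> n"
  shows "bloops n (bp12 n) (bp12 n) = 1"
proof -
  let ?R = "stack_conn n (bp12 n) (bp12 n)"
  let ?c = "\<lambda>(l::nat, i::nat). if i < 2 then Inl l else Inr i"
  have upper: "?c (emb_upper (bp12 n p)) = ?c (emb_upper p)" if "p \<in> bpoints n" for p
    using that by (cases p) (simp add: bp12_def emb_upper_def)
  have lower: "?c (emb_lower (bp12 n p)) = ?c (emb_lower p)" if "p \<in> bpoints n" for p
    using that by (cases p) (simp add: bp12_def emb_lower_def)
  have middle: "?R `` {(1, i)} \<subseteq> {1} \<times> UNIV" if "i < 2" for i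
  proof
    fix x assume "x \<in> ?R `` {(1, i)}"
    then have "?c x = ?c (1, i)" using stack_conn_label_eq[where c = ?c, OF _ upper lower] by blast
    then show "x \<in> {1} \<times> UNIV" using that by (cases x) (auto split: if_splits)
  qed
  have escape: "\<not> ?R `` {(1, i)} \<subseteq> {1} \<times> UNIV" if "2 \<le> i" "i < n" for i
  proof -
    have "((1, i), (0, i)) \<in> ?R"
      using that by (intro stack_conn_upperI[where p = "(False, i)"]) (auto simp: bp12_def emb_upper_def)
    then show ?thesis by auto
  qed
  have "((1, 0), (1, 1)) \<in> ?R"
    using n by (intro stack_conn_upperI[where p = "(False, 0)"]) (auto simp: bp12_def emb_upper_def)
  then have same: "?R `` {(1, 1)} = ?R `` {(1, 0)}"
    by (rule stack_conn_Image_eq[symmetric])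
  have closed_iff: "i < n \<and> ?R `` {(1, i)} \<subseteq> {1} \<times> UNIV \<longleftrightarrow> i = 0 \<or> i = 1" for i
  proof (cases "i < 2")
    case True
    then show ?thesis using middle[OF True] n by auto
  next
    case False
    then show ?thesis using escape[of i] by auto
  qed
  have "{?R `` {(1, i)} | i. i < n \<and> ?R `` {(1, i)} \<subseteq> {1} \<times> UNIV} = {?R `` {(1, 0)}, ?R `` {(1, 1)}}"
    unfolding closed_iff by blast
  then show ?thesis unfolding bloops_def same by simp
qed

lemma stack_conn_bp12_bs23_p12:
  assumes n: "3 \<le> n"
  shows "((0, 2), (1, 0)) \<in> stack_conn n (bp12 n) (bs23_p12 n)"
    and "((1, 1), (2, 2)) \<in> stack_conn n (bp12 n) (bs23_p12 n)"
    and "((0, 2), (2, 2)) \<in> stack_conn n (bp12 n) (bs23_p12 n)"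
proof -
  let ?R = "stack_conn n (bp12 n) (bs23_p12 n)"
  have "((0, 2), (1, 2)) \<in> ?R"
    using n by (intro stack_conn_upperI[where p = "(True, 2)"]) (auto simp: bp12_def emb_upper_def)
  moreover have "((1, 2), (1, 0)) \<in> ?R"
    using n by (intro stack_conn_lowerI[where p = "(True, 2)"]) (auto simp: bs23_p12_def emb_lower_def)
  ultimately show "((0, 2), (1, 0)) \<in> ?R" by (rule stack_conn_trans)
  moreover have "((1, 0), (1, 1)) \<in> ?R"
    using n by (intro stack_conn_upperI[where p = "(False, 0)"]) (auto simp: bp12_def emb_upper_def)
  moreover show "((1, 1), (2, 2)) \<in> ?R"
    using n by (intro stack_conn_lowerI[where p = "(True, 1)"]) (auto simp: bs23_p12_def emb_lower_def)
  ultimately show "((0, 2), (2, 2)) \<in> ?R" by (meson stack_conn_trans)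
qed

lemma bcompose_bp12_bs23_p12:
  assumes n: "3 \<le> n"
  shows "bcompose n (bp12 n) (bs23_p12 n) = bp12 n"
proof (rule bcompose_eq_by_label[where c = "\<lambda>(l, i). if 3 \<le> i then Inr i else if i = 2 then Inl 1 else Inl l"])
  show "bp12 n \<in> brauer_diagrams n" using n by (intro bp12_in_brauer) simp
next
  fix p :: bpoint assume p: "p \<in> bpoints n"
  then obtain b i where bi: "p = (b, i)" "i < n" by (cases p) auto
  consider "i < 2" | "i = 2" | "3 \<le> i" by linarith
  then show "(emb_outer p, emb_outer (bp12 n p)) \<in> stack_conn n (bp12 n) (bs23_p12 n)"
  proof cases
    case 1
    show ?thesis
    proof (cases b)
      case True
      then show ?thesis using p bi 1 by (intro stack_conn_top_arc) (simp_all add: bp12_def)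
    next
      case False
      then have "bs23_p12 n p = bp12 n p" "\<not> fst (bp12 n p)"
        using bi 1 by (auto simp: bp12_def bs23_p12_def)
      then show ?thesis using stack_conn_bottom_arc[OF p, of "bs23_p12 n" "bp12 n"] bi False by simp
    qed
  next
    case 2
    then show ?thesis using bi stack_conn_bp12_bs23_p12(3)[OF n]
      by (cases b) (auto simp: bp12_def emb_outer_def intro: stack_conn_sym)
  next
    case 3
    then show ?thesis using bi stack_conn_vertical[of i n "bp12 n" "bs23_p12 n"]
      by (cases b) (simp_all add: bp12_def bs23_p12_def emb_outer_def)
  qed
qed (use n in \<open>auto simp: bp12_def bs23_p12_def emb_upper_def emb_lower_def emb_outer_def bpoints_def split: if_splits\<close>)

lemma bloops_bp12_bs23_p12:
  assumes n: "3 \<le> n"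
  shows "bloops n (bp12 n) (bs23_p12 n) = 0"
proof (rule bloops_eq_0I)
  let ?R = "stack_conn n (bp12 n) (bs23_p12 n)"
  fix i assume i: "i < n"
  consider "i = 0" | "i = 1" | "2 \<le> i" by linarith
  then show "\<exists>x. ((1, i), x) \<in> ?R \<and> fst x \<noteq> 1"
  proof cases
    case 1
    then show ?thesis using stack_conn_sym[OF stack_conn_bp12_bs23_p12(1)[OF n]] by auto
  next
    case 2
    then show ?thesis using stack_conn_bp12_bs23_p12(2)[OF n] by auto
  next
    case 3
    then have "((1, i), (0, i)) \<in> ?R"
      using i by (intro stack_conn_upperI[where p = "(False, i)"]) (auto simp: bp12_def emb_upper_def)
    then show ?thesis by auto
  qed
qed

section \<open>The spectrum of S - P from the relations\<close>

lemma smult_one_mat [simp]: "1 \<cdot>\<^sub>m (A :: 'a :: semiring_1 mat) = A"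
  by (rule eq_matI) auto

lemma smult_mat_mult_vec:
  "A \<in> carrier_mat nr nc \<Longrightarrow> x \<in> carrier_vec nc \<Longrightarrow> (k \<cdot>\<^sub>m A) *\<^sub>v x = k \<cdot>\<^sub>v (A *\<^sub>v (x :: 'a :: comm_ring vec))"
  by (intro eq_vecI) (auto simp: scalar_prod_def sum_distrib_left ac_simps)

lemma smult_vec_cancel:
  fixes v :: "'a :: field vec"
  assumes v: "v \<in> carrier_vec N" "v \<noteq> 0\<^sub>v N" and eq: "c \<cdot>\<^sub>v v = d \<cdot>\<^sub>v v"
  shows "c = d"
proof -
  have "\<exists>i<N. v $ i \<noteq> 0"
  proof (rule ccontr)
    assume "\<not> (\<exists>i<N. v $ i \<noteq> 0)"
    then have "v = 0\<^sub>v N" using v(1) by (intro eq_vecI) auto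
    with v(2) show False ..
  qed
  then obtain i where i: "i < N" "v $ i \<noteq> 0" by blast
  have "c * v $ i = d * v $ i" using arg_cong[OF eq, of "\<lambda>x. x $ i"] i v(1) by simp
  with i(2) show ?thesis by simp
qed

lemma minus_vec_eq_0_iff:
  "v \<in> carrier_vec N \<Longrightarrow> w \<in> carrier_vec N \<Longrightarrow> v - w = 0\<^sub>v N \<longleftrightarrow> v = (w :: 'a :: group_add vec)"
  by (auto simp: vec_eq_iff)

text \<open>S, P and B stand for the images of s_12, p_12 and s_23.\<close>

locale brauer_relations =
  fixes N :: nat and m :: "'k :: field" and S P B :: "'k mat"
  assumes S_carrier [simp]: "S \<in> carrier_mat N N"
    and P_carrier [simp]: "P \<in> carrier_mat N N"
    and B_carrier [simp]: "B \<in> carrier_mat N N"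
    and S_S: "S * S = 1\<^sub>m N"
    and B_B: "B * B = 1\<^sub>m N"
    and P_P: "P * P = m \<cdot>\<^sub>m P"
    and S_P: "S * P = P"
    and P_S: "P * S = P"
    and P_B_P: "P * B * P = P"
    and braid: "S * B * S = B * S * B"
begin

lemma dim_simps [simp]:
  "dim_row S = N" "dim_row P = N" "dim_row B = N" "dim_col S = N" "dim_col P = N" "dim_col B = N"
  using carrier_matD S_carrier P_carrier B_carrier by blast+

lemmas mult_vec_distribs = mult_add_distrib_mat_vec[of _ N N] mult_minus_distrib_mat_vec[of _ N N]
  minus_mult_distrib_mat_vec[of _ N N] mult_mat_vec[of _ N N] smult_mat_mult_vec[of _ N N]

lemma carrier_mult_vec [simp]:
  "x \<in> carrier_vec N \<Longrightarrow> S *\<^sub>v x \<in> carrier_vec N"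
  "x \<in> carrier_vec N \<Longrightarrow> P *\<^sub>v x \<in> carrier_vec N"
  "x \<in> carrier_vec N \<Longrightarrow> B *\<^sub>v x \<in> carrier_vec N"
  by (simp_all add: mult_mat_vec_carrier[of _ N N])

lemma mult_vec_simps [simp]:
  assumes x: "x \<in> carrier_vec N"
  shows "S *\<^sub>v (S *\<^sub>v x) = x" "B *\<^sub>v (B *\<^sub>v x) = x" "P *\<^sub>v (P *\<^sub>v x) = m \<cdot>\<^sub>v (P *\<^sub>v x)"
    "S *\<^sub>v (P *\<^sub>v x) = P *\<^sub>v x" "P *\<^sub>v (S *\<^sub>v x) = P *\<^sub>v x" "P *\<^sub>v (B *\<^sub>v (P *\<^sub>v x)) = P *\<^sub>v x"
proof -
  have assoc: "X *\<^sub>v (Y *\<^sub>v x) = (X * Y) *\<^sub>v x" if "X \<in> carrier_mat N N" "Y \<in> carrier_mat N N" for X Y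
    using assoc_mult_mat_vec[OF that x] by simp
  show "S *\<^sub>v (S *\<^sub>v x) = x" "B *\<^sub>v (B *\<^sub>v x) = x"
    "S *\<^sub>v (P *\<^sub>v x) = P *\<^sub>v x" "P *\<^sub>v (S *\<^sub>v x) = P *\<^sub>v x"
    using x by (simp_all add: assoc S_S B_B S_P P_S)
  show "P *\<^sub>v (P *\<^sub>v x) = m \<cdot>\<^sub>v (P *\<^sub>v x)"
    using x by (simp add: assoc P_P mult_vec_distribs)
  have "(P * B * P) *\<^sub>v x = (P * B) *\<^sub>v (P *\<^sub>v x)"
    by (rule assoc_mult_mat_vec[OF mult_carrier_mat[OF P_carrier B_carrier] P_carrier x])
  also have "\<dots> = P *\<^sub>v (B *\<^sub>v (P *\<^sub>v x))"
    using x by (intro assoc_mult_mat_vec[OF P_carrier B_carrier]) simp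
  finally show "P *\<^sub>v (B *\<^sub>v (P *\<^sub>v x)) = P *\<^sub>v x" by (simp add: P_B_P)
qed

lemma braid_vec: "x \<in> carrier_vec N \<Longrightarrow> S *\<^sub>v (B *\<^sub>v (S *\<^sub>v x)) = B *\<^sub>v (S *\<^sub>v (B *\<^sub>v x))"
  using assoc_mult_mat_vec[of "S * B" N N S N x] assoc_mult_mat_vec[of "B * S" N N B N x]
    assoc_mult_mat_vec[of S N N B N] assoc_mult_mat_vec[of B N N S N] braid
  by simp

lemma eigenvector_iff: "eigenvector (S - P) v k \<longleftrightarrow>
    v \<in> carrier_vec N \<and> v \<noteq> 0\<^sub>v N \<and> S *\<^sub>v v - P *\<^sub>v v = k \<cdot>\<^sub>v v"
  by (auto simp: eigenvector_def mult_vec_distribs)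

lemma P_mult_t12: "x \<in> carrier_vec N \<Longrightarrow> P *\<^sub>v (S *\<^sub>v x - P *\<^sub>v x) = (1 - m) \<cdot>\<^sub>v (P *\<^sub>v x)"
  by (simp add: mult_vec_distribs) (auto simp: vec_eq_iff algebra_simps)

lemma eigenvalue_not_pm1:
  assumes "eigenvector (S - P) v k" "k \<noteq> 1" "k \<noteq> -1"
  shows "k = 1 - m" "P *\<^sub>v v \<noteq> 0\<^sub>v N"
proof -
  from assms(1) have v: "v \<in> carrier_vec N" "v \<noteq> 0\<^sub>v N" and Tv: "S *\<^sub>v v - P *\<^sub>v v = k \<cdot>\<^sub>v v"
    by (auto simp: eigenvector_iff)
  show Pv: "P *\<^sub>v v \<noteq> 0\<^sub>v N"
  proof
    assume "P *\<^sub>v v = 0\<^sub>v N"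
    then have Sv: "S *\<^sub>v v = k \<cdot>\<^sub>v v" using Tv v by simp
    have "1 \<cdot>\<^sub>v v = S *\<^sub>v (S *\<^sub>v v)" using v by simp
    also have "\<dots> = (k * k) \<cdot>\<^sub>v v" using v by (simp add: Sv mult_vec_distribs smult_smult_assoc)
    finally have "k * k = 1" using smult_vec_cancel[OF v] by metis
    with assms(2,3) show False by (simp add: square_eq_1_iff)
  qed
  have "(1 - m) \<cdot>\<^sub>v (P *\<^sub>v v) = k \<cdot>\<^sub>v (P *\<^sub>v v)"
    using P_mult_t12[OF v(1)] Tv v by (simp add: mult_vec_distribs)
  then show "k = 1 - m" using smult_vec_cancel[OF _ Pv] v by simp
qed

lemma spectrum_t12_subset: "spectrum (S - P) \<subseteq> {-1, 1, 1 - m}"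
  using eigenvalue_not_pm1(1) by (auto simp: spectrum_def eigenvalue_def)

lemma eigenvalue_t12_of_kernel:
  assumes "x \<in> carrier_vec N" "x \<noteq> 0\<^sub>v N" "P *\<^sub>v x = 0\<^sub>v N" "S *\<^sub>v x = k \<cdot>\<^sub>v x"
  shows "eigenvalue (S - P) k"
  unfolding eigenvalue_def eigenvector_iff using assms by (intro exI[of _ x]) simp

lemma eigenvalues_t12_pm1:
  assumes v: "v \<in> carrier_vec N" and Pv: "P *\<^sub>v v \<noteq> 0\<^sub>v N" and m: "m \<noteq> 1" "m \<noteq> -2"
  shows "eigenvalue (S - P) (-1)" "eigenvalue (S - P) 1"
proof -
  define u where "u = P *\<^sub>v v"
  define w where "w = B *\<^sub>v u"
  define a where "a = S *\<^sub>v w"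
  have [simp]: "u \<in> carrier_vec N" "w \<in> carrier_vec N" "a \<in> carrier_vec N"
    using v by (simp_all add: u_def w_def a_def)
  then have [simp]: "dim_vec u = N" "dim_vec w = N" "dim_vec a = N" by auto
  have u0: "u \<noteq> 0\<^sub>v N" using Pv by (simp add: u_def)
  have Su: "S *\<^sub>v u = u" and Pu: "P *\<^sub>v u = m \<cdot>\<^sub>v u" and Pw: "P *\<^sub>v w = u"
    using v by (simp_all add: u_def w_def)
  have Bu: "B *\<^sub>v u = w" and Bw: "B *\<^sub>v w = u" and Sw: "S *\<^sub>v w = a" and Sa: "S *\<^sub>v a = w" and Pa: "P *\<^sub>v a = u"
    using Pw by (simp_all add: w_def a_def)
  have Ba: "B *\<^sub>v a = a"
    using braid_vec[of u] Su by (simp add: a_def w_def)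
  have "w \<noteq> u"
  proof
    assume "w = u"
    then have "m \<cdot>\<^sub>v u = 1 \<cdot>\<^sub>v u" using Pu Pw by simp
    then show False using smult_vec_cancel[OF _ u0] m(1) by simp
  qed
  then have "w \<noteq> a" using Ba Bw by metis
  let ?x = "w - a"
  have "?x \<noteq> 0\<^sub>v N" using \<open>w \<noteq> a\<close> by (simp add: minus_vec_eq_0_iff)
  moreover have "P *\<^sub>v ?x = 0\<^sub>v N" by (simp add: mult_vec_distribs Pw Pa)
  moreover have "S *\<^sub>v ?x = (-1) \<cdot>\<^sub>v ?x"
    by (simp add: mult_vec_distribs Sw Sa) (rule eq_vecI; simp)
  ultimately show "eigenvalue (S - P) (-1)" by (intro eigenvalue_t12_of_kernel) simp_all
  let ?y = "m \<cdot>\<^sub>v (w + a) - 2 \<cdot>\<^sub>v u"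
  have "?y - B *\<^sub>v ?y = (m + 2) \<cdot>\<^sub>v (w - u)"
    by (simp add: mult_vec_distribs Bu Bw Ba) (rule eq_vecI; simp add: algebra_simps)
  moreover have "w - u \<noteq> 0\<^sub>v N" using \<open>w \<noteq> u\<close> by (simp add: minus_vec_eq_0_iff)
  ultimately have "?y \<noteq> 0\<^sub>v N"
  proof (intro notI)
    assume y_diff: "?y - B *\<^sub>v ?y = (m + 2) \<cdot>\<^sub>v (w - u)" and "w - u \<noteq> 0\<^sub>v N" and y0: "?y = 0\<^sub>v N"
    have "B *\<^sub>v 0\<^sub>v N = 0\<^sub>v N" by (rule eq_vecI) simp_all
    then have "(m + 2) \<cdot>\<^sub>v (w - u) = 0\<^sub>v N" using y_diff y0 by simp
    also have "\<dots> = 0 \<cdot>\<^sub>v (w - u)" by (rule eq_vecI) simp_all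
    finally have "(m + 2) \<cdot>\<^sub>v (w - u) = 0 \<cdot>\<^sub>v (w - u)" .
    then have "m + 2 = 0" using smult_vec_cancel[OF _ \<open>w - u \<noteq> 0\<^sub>v N\<close>] by simp
    then show False using m(2) by (simp add: eq_neg_iff_add_eq_0)
  qed
  moreover have "P *\<^sub>v ?y = 0\<^sub>v N"
    by (simp add: mult_vec_distribs Pw Pa Pu) (rule eq_vecI; simp add: algebra_simps)
  moreover have "S *\<^sub>v ?y = 1 \<cdot>\<^sub>v ?y"
    by (simp add: mult_vec_distribs Sw Sa Su) (rule eq_vecI; simp add: algebra_simps)
  ultimately show "eigenvalue (S - P) 1" by (intro eigenvalue_t12_of_kernel) simp_all
qed

lemma spectrum_t12_cases:
  assumes m: "m \<noteq> 1" "m \<noteq> -2"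
  shows "spectrum (S - P) \<subseteq> {-1, 1} \<or> (P \<noteq> 0\<^sub>m N N \<and> spectrum (S - P) = {-1, 1, 1 - m})"
proof (cases "spectrum (S - P) \<subseteq> {-1, 1}")
  case False
  then obtain k where k_spec: "k \<in> spectrum (S - P)" and k: "k \<noteq> 1" "k \<noteq> -1" by blast
  then obtain v where ev: "eigenvector (S - P) v k" by (auto simp: spectrum_def eigenvalue_def)
  then have v: "v \<in> carrier_vec N" by (simp add: eigenvector_iff)
  note k_eq = eigenvalue_not_pm1[OF ev k]
  note eigenvalues_t12_pm1[OF v k_eq(2) m]
  moreover have "P \<noteq> 0\<^sub>m N N"
  proof
    assume "P = 0\<^sub>m N N"
    then have "P *\<^sub>v v = 0\<^sub>v N" using v by (intro eq_vecI) simp_all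
    with k_eq(2) show False ..
  qed
  ultimately show ?thesis using spectrum_t12_subset k_spec k_eq(1) by (auto simp: spectrum_def)
qed simp

end

lemma brauer_rep_mult_no_loops:
  assumes "brauer_rep n m N \<rho>" "d1 \<in> brauer_diagrams n" "d2 \<in> brauer_diagrams n" "bloops n d1 d2 = 0"
  shows "\<rho> d1 * \<rho> d2 = \<rho> (bcompose n d1 d2)"
  using assms by (simp add: brauer_rep_def)

lemma brauer_rep_mult_perm_diagram:
  assumes rep: "brauer_rep n m N \<rho>" and f: "perm_pair n f f'" and g: "perm_pair n g g'"
  shows "\<rho> (perm_diagram n f f') * \<rho> (perm_diagram n g g') = \<rho> (perm_diagram n (g \<circ> f) (f' \<circ> g'))"
  using brauer_rep_mult_no_loops[OF rep perm_diagram_in_brauer[OF f] perm_diagram_in_brauer[OF g]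
      bloops_perm_diagram_left[OF f]]
  by (simp add: bcompose_perm_diagram[OF f g])

lemma brauer_rep_relations:
  assumes rep: "brauer_rep n m N \<rho>" and n: "3 \<le> n"
  shows "brauer_relations N m (\<rho> (bs12 n)) (\<rho> (bp12 n)) (\<rho> (bs23 n))"
proof -
  let ?\<tau> = "transpose (0::nat) 1" and ?\<sigma> = "transpose (1::nat) 2"
  have \<tau>: "perm_pair n ?\<tau> ?\<tau>" and \<sigma>: "perm_pair n ?\<sigma> ?\<sigma>"
    using n by (simp_all add: perm_pair_transpose)
  have s12: "bs12 n = perm_diagram n ?\<tau> ?\<tau>" by (rule bs12_eq_perm_diagram)
  have s23: "bs23 n = perm_diagram n ?\<sigma> ?\<sigma>" by (rule bs23_def)
  have s12_in: "bs12 n \<in> brauer_diagrams n" and s23_in: "bs23 n \<in> brauer_diagrams n"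
    using perm_diagram_in_brauer[OF \<tau>] perm_diagram_in_brauer[OF \<sigma>] by (simp_all add: s12 s23)
  have s12_loops: "bloops n (bs12 n) d = 0" "bloops n d (bs12 n) = 0" for d
    unfolding s12 by (rule bloops_perm_diagram_left[OF \<tau>], rule bloops_perm_diagram_right[OF \<tau>])
  have s23_loops: "bloops n (bs23 n) d = 0" for d
    unfolding s23 by (rule bloops_perm_diagram_left[OF \<sigma>])
  have p12: "bp12 n \<in> brauer_diagrams n" using n by (simp add: bp12_in_brauer)
  have p12': "bs23_p12 n \<in> brauer_diagrams n" using n by (rule bs23_p12_in_brauer)
  have carrier: "\<rho> d \<in> carrier_mat N N" if "d \<in> brauer_diagrams n" for d
    using rep that by (simp add: brauer_rep_def)
  have one: "\<rho> (perm_diagram n id id) = 1\<^sub>m N"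
    using rep by (simp add: brauer_rep_def flip: bid_eq_perm_diagram)
  have braid_perm: "?\<tau> \<circ> ?\<sigma> \<circ> ?\<tau> = ?\<sigma> \<circ> ?\<tau> \<circ> ?\<sigma>"
    by (simp add: fun_eq_iff transpose_def)
  show ?thesis
  proof
    show "\<rho> (bs12 n) \<in> carrier_mat N N" "\<rho> (bs23 n) \<in> carrier_mat N N" "\<rho> (bp12 n) \<in> carrier_mat N N"
      using carrier s12_in s23_in p12 by simp_all
    show "\<rho> (bs12 n) * \<rho> (bs12 n) = 1\<^sub>m N"
      using brauer_rep_mult_perm_diagram[OF rep \<tau> \<tau>] one by (simp add: s12)
    show "\<rho> (bs23 n) * \<rho> (bs23 n) = 1\<^sub>m N"
      using brauer_rep_mult_perm_diagram[OF rep \<sigma> \<sigma>] one by (simp add: s23)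
    show "\<rho> (bp12 n) * \<rho> (bp12 n) = m \<cdot>\<^sub>m \<rho> (bp12 n)"
      using rep p12 n by (simp add: brauer_rep_def bcompose_bp12_bp12 bloops_bp12_bp12)
    show "\<rho> (bs12 n) * \<rho> (bp12 n) = \<rho> (bp12 n)"
      using brauer_rep_mult_no_loops[OF rep s12_in p12 s12_loops(1)] bcompose_bs12_bp12 n by simp
    show "\<rho> (bp12 n) * \<rho> (bs12 n) = \<rho> (bp12 n)"
      using brauer_rep_mult_no_loops[OF rep p12 s12_in s12_loops(2)] bcompose_bp12_bs12 n by simp
    have "\<rho> (bs23 n) * \<rho> (bp12 n) = \<rho> (bs23_p12 n)"
      using brauer_rep_mult_no_loops[OF rep s23_in p12 s23_loops] bcompose_bs23_bp12 n by simp
    moreover have "\<rho> (bp12 n) * \<rho> (bs23_p12 n) = \<rho> (bp12 n)"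
      using brauer_rep_mult_no_loops[OF rep p12 p12' bloops_bp12_bs23_p12[OF n]]
        bcompose_bp12_bs23_p12[OF n] by simp
    ultimately show "\<rho> (bp12 n) * \<rho> (bs23 n) * \<rho> (bp12 n) = \<rho> (bp12 n)"
      using carrier p12 s23_in by (simp add: assoc_mult_mat[of _ N N _ N _ N])
    show "\<rho> (bs12 n) * \<rho> (bs23 n) * \<rho> (bs12 n) = \<rho> (bs23 n) * \<rho> (bs12 n) * \<rho> (bs23 n)"
      using brauer_rep_mult_perm_diagram[OF rep perm_pair_comp[OF \<tau> \<sigma>] \<tau>]
        brauer_rep_mult_perm_diagram[OF rep perm_pair_comp[OF \<sigma> \<tau>] \<sigma>]
        brauer_rep_mult_perm_diagram[OF rep \<tau> \<sigma>] brauer_rep_mult_perm_diagram[OF rep \<sigma> \<tau>] braid_perm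
      by (simp add: s12 s23 comp_assoc)
  qed
qed

lemma finite_boxes: "finite (boxes \<mu>)"
proof (rule finite_subset)
  show "boxes \<mu> \<subseteq> {..length \<mu>} \<times> {..sum_list \<mu>}"
    by (auto simp: boxes_def part_def intro: order_trans[OF _ member_le_sum_list])
qed simp

lemma S_set_memI:
  assumes "is_partition \<mu>" "sum_list \<mu> \<le> n" "even (n - sum_list \<mu>)"
    and "b \<in> boxes \<mu>" "oshift \<mu> b + z = 0"
  shows "z \<in> S_set n"
proof -
  have "poly (P_O \<mu>) (of_int z) = 0"
    unfolding P_O_def poly_smult poly_prod using finite_boxes assms(4,5)
    by (auto intro!: bexI[of _ b] simp: prod_zero_iff)
  then show ?thesis unfolding S_set_def using assms(1-3) by blast
qed

text \<open>The witnesses: P_(2)(x) = (x - 1)(x + 2)/2, P_(3)(x) = (x - 1) x (x + 4)/6 and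
  P_(2,1)(x) = (x - 2) x (x + 2)/3, using a partition of the same parity as n.\<close>

lemma one_mem_S_set:
  assumes "3 \<le> n"
  shows "1 \<in> S_set n"
proof (cases "even n")
  case True
  show ?thesis
    by (rule S_set_memI[of "[2]" _ "(1, 2)"])
       (use assms True in \<open>auto simp: is_partition_def boxes_def part_def oshift_def\<close>)
next
  case False
  show ?thesis
    by (rule S_set_memI[of "[3]" _ "(1, 3)"])
       (use assms False in \<open>auto simp: is_partition_def boxes_def part_def oshift_def\<close>)
qed

lemma neg_two_mem_S_set:
  assumes "3 \<le> n"
  shows "-2 \<in> S_set n"
proof (cases "even n")
  case True
  show ?thesis
    by (rule S_set_memI[of "[2]" _ "(1, 1)"])
       (use assms True in \<open>auto simp: is_partition_def boxes_def part_def oshift_def\<close>)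
next
  case False
  show ?thesis
    by (rule S_set_memI[of "[2, 1]" _ "(1, 1)"])
       (use assms False in \<open>auto simp: is_partition_def boxes_def part_def oshift_def le_Suc_eq\<close>)
qed

theorem mainTheorem9:
  fixes m :: "'k::field_char_0" and n N :: nat and \<rho> :: "bdiagram \<Rightarrow> 'k mat"
  assumes "n \<ge> 3"
    and "\<forall>z\<in>S_set n. m \<noteq> of_int z"
    and "irreducible_brauer_rep n m N \<rho>"
  shows "spectrum (rep_t12 n \<rho>) \<subseteq> {-1, 1}
       \<or> (\<not> factors_through_sym n N \<rho> \<and> spectrum (rep_t12 n \<rho>) = {-1, 1, 1 - m})"
proof -
  have rep: "brauer_rep n m N \<rho>" using assms(3) by (simp add: irreducible_brauer_rep_def)
  interpret brauer_relations N m "\<rho> (bs12 n)" "\<rho> (bp12 n)" "\<rho> (bs23 n)"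
    using brauer_rep_relations[OF rep assms(1)] .
  have "m \<noteq> 1" "m \<noteq> -2"
    using assms(2) one_mem_S_set[OF assms(1)] neg_two_mem_S_set[OF assms(1)] by force+
  then have cases: "spectrum (rep_t12 n \<rho>) \<subseteq> {-1, 1} \<or>
      (\<rho> (bp12 n) \<noteq> 0\<^sub>m N N \<and> spectrum (rep_t12 n \<rho>) = {-1, 1, 1 - m})"
    unfolding rep_t12_def by (rule spectrum_t12_cases)
  have "\<rho> (bp12 n) = 0\<^sub>m N N" if "factors_through_sym n N \<rho>"
  proof -
    have "bid n \<in> brauer_diagrams n" by (simp add: bid_eq_perm_diagram perm_diagram_in_brauer perm_pair_def)
    then have "\<rho> (bid n) * \<rho> (bp12 n) * \<rho> (bid n) = 0\<^sub>m N N"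
      using that by (simp add: factors_through_sym_def)
    then show ?thesis using rep by (simp add: brauer_rep_def)
  qed
  with cases show ?thesis by blast
qed

end
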